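(* Let $r\ge1$, $L\ge1$, and $\mathbf s_1,\dots,\mathbf s_L\in V(G_n)_r$ with $a=|\bigcup_{j=1}^L\bar{\mathbf s}_j|$. If $p_n\in(0,1)$ satisfies $\limsup_{n\to\infty}p_n<1$, then $$p_n^a\lesssim_r\mathbb E|Z_{\mathbf s_1}Z_{\mathbf s_2}\cdots Z_{\mathbf s_L}|\le(L+2)!\,p_n^a.$$
   Context: $V(G_n)$ is a finite vertex set; $V(G_n)_r$ is the set of $r$-tuples of distinct elements, $\bar{\mathbf s}$ the set of entries. $\{X_v\}$ are i.i.d. Bernoulli$(p_n)$, $X_{\mathbf s}=\prod_{u=1}^rX_{s_u}$, $Z_{\mathbf s}=X_{\mathbf s}-p_n^r$. $\lesssim_r$ means up to a positive constant depending only on $r$ (and not on $n$). *)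

theory Defs
  imports "HOL-Probability.Probability"
begin

text \<open>A vertex configuration is X :: 'v => bool (X v = True means X_v = 1).
  An r-tuple of distinct vertices is a distinct list of length r.\<close>

definition Xtup :: "('v \<Rightarrow> bool) \<Rightarrow> 'v list \<Rightarrow> real" where
  "Xtup X s = (\<Prod>u\<leftarrow>s. of_bool (X u))"

definition Ztup :: "real \<Rightarrow> ('v \<Rightarrow> bool) \<Rightarrow> 'v list \<Rightarrow> real" where
  "Ztup q X s = Xtup X s - q ^ length s"

definition bern_field :: "'v set \<Rightarrow> real \<Rightarrow> ('v \<Rightarrow> bool) pmf" where
  "bern_field Vn q = Pi_pmf Vn False (\<lambda>_. bernoulli_pmf q)"

definition absZmoment :: "'v set \<Rightarrow> real \<Rightarrow> 'v list list \<Rightarrow> real" where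
  "absZmoment Vn q ss =
     measure_pmf.expectation (bern_field Vn q) (\<lambda>X. \<bar>\<Prod>s\<leftarrow>ss. Ztup q X s\<bar>)"

end

theory Submission
  imports Defs
begin

text \<open>On the event that every vertex of every tuple is occupied, which has probability
  q^a, each factor Z_s equals 1 - q^|s| \<ge> 1 - q; this gives the lower bound (1 - q)^L q^a.
  For the upper bound, use |Z_s| \<le> X_s + q^|s| and peel off one tuple at a time while
  carrying an occupancy constraint on a vertex set W: the term X_s adds the vertices of s to
  W, the term q^|s| pays for them directly, so each tuple at most doubles the bound
  2^L q^|W \<union> vertices|.\<close>

lemma Xtup_eq_of_bool: "Xtup X s = of_bool (\<forall>v\<in>set s. X v)"
  unfolding Xtup_def by (induction s) auto

lemma abs_Ztup_le:
  assumes "0 \<le> q" "q \<le> 1"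
  shows "\<bar>Ztup q X s\<bar> \<le> Xtup X s + q ^ length s"
  using assms by (auto simp: Ztup_def Xtup_eq_of_bool power_le_one)

lemma integrable_bern_field:
  "finite Vn \<Longrightarrow> integrable (measure_pmf (bern_field Vn q)) (f :: _ \<Rightarrow> real)"
  unfolding bern_field_def
  by (intro integrable_measure_pmf_finite, subst set_Pi_pmf) (auto intro!: finite_PiE_dflt)

lemma expectation_bern_field_all_occupied:
  assumes "finite Vn" "U \<subseteq> Vn" "0 \<le> q" "q \<le> 1"
  shows "measure_pmf.expectation (bern_field Vn q) (\<lambda>X. of_bool (\<forall>v\<in>U. X v)) = q ^ card U"
proof -
  define f :: "_ \<Rightarrow> bool \<Rightarrow> real" where "f v y = (if v \<in> U then of_bool y else 1)" for v y
  have finU: "finite U"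
    using assms(1,2) finite_subset by blast
  have "of_bool (\<forall>v\<in>U. X v) = (\<Prod>v\<in>Vn. f v (X v))" for X
  proof -
    have "(\<Prod>v\<in>Vn. f v (X v)) = (\<Prod>v\<in>U. of_bool (X v) :: real)"
      using assms(1,2) by (simp add: f_def prod.If_cases Int_absorb1)
    also have "\<dots> = of_bool (\<forall>v\<in>U. X v)"
      using finU by (induction U rule: finite_induct) auto
    finally show ?thesis by simp
  qed
  then have "measure_pmf.expectation (bern_field Vn q) (\<lambda>X. of_bool (\<forall>v\<in>U. X v)) =
      measure_pmf.expectation (Pi_pmf Vn False (\<lambda>_. bernoulli_pmf q)) (\<lambda>X. \<Prod>v\<in>Vn. f v (X v))"
    unfolding bern_field_def by simp
  also have "\<dots> = (\<Prod>v\<in>Vn. measure_pmf.expectation (bernoulli_pmf q) (f v))"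
    by (rule expectation_prod_Pi_pmf)
       (auto intro: assms integrable_measure_pmf_finite simp: f_def)
  also have "\<dots> = (\<Prod>v\<in>Vn. if v \<in> U then q else 1)"
    using assms by (intro prod.cong) (auto simp: f_def)
  also have "\<dots> = q ^ card U"
    using assms(1,2) by (simp add: prod.If_cases Int_absorb1)
  finally show ?thesis .
qed

lemma abs_prod_Ztup_ge_if_occupied:
  assumes "0 \<le> q" "q \<le> 1" "\<forall>s\<in>set ss. s \<noteq> [] \<and> (\<forall>v\<in>set s. X v)"
  shows "(1 - q) ^ length ss \<le> \<bar>\<Prod>s\<leftarrow>ss. Ztup q X s\<bar>"
  using assms(3)
proof (induction ss)
  case (Cons s ss)
  have "1 - q \<le> 1 - q ^ length s"
    using assms(1,2) Cons.prems power_decreasing[of 1 "length s" q] by (simp add: Suc_le_eq)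
  also have "1 - q ^ length s = \<bar>Ztup q X s\<bar>"
    using assms(1,2) Cons.prems by (simp add: Ztup_def Xtup_eq_of_bool power_le_one)
  finally have "(1 - q) * (1 - q) ^ length ss \<le> \<bar>Ztup q X s\<bar> * \<bar>\<Prod>s\<leftarrow>ss. Ztup q X s\<bar>"
    using assms(2) Cons by (intro mult_mono) auto
  then show ?case by (simp add: abs_mult)
qed simp

lemma absZmoment_lower_bound:
  assumes "finite Vn" "0 \<le> q" "q \<le> 1" "\<forall>s\<in>set ss. s \<noteq> [] \<and> set s \<subseteq> Vn"
  shows "(1 - q) ^ length ss * q ^ card (\<Union>s\<in>set ss. set s) \<le> absZmoment Vn q ss"
proof -
  let ?U = "\<Union>s\<in>set ss. set s"
  have "(1 - q) ^ length ss * q ^ card ?U =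
      measure_pmf.expectation (bern_field Vn q) (\<lambda>X. (1 - q) ^ length ss * of_bool (\<forall>v\<in>?U. X v))"
    using assms expectation_bern_field_all_occupied[of Vn ?U q] by (simp add: UN_least)
  also have "\<dots> \<le> absZmoment Vn q ss"
    unfolding absZmoment_def
    using assms abs_prod_Ztup_ge_if_occupied[of q ss]
    by (intro integral_mono integrable_bern_field) auto
  finally show ?thesis .
qed

lemma expectation_abs_prod_Ztup_occupied_le:
  assumes "finite Vn" "0 \<le> q" "q \<le> 1" "W \<subseteq> Vn" "\<forall>s\<in>set ss. set s \<subseteq> Vn"
  shows "measure_pmf.expectation (bern_field Vn q)
           (\<lambda>X. \<bar>\<Prod>s\<leftarrow>ss. Ztup q X s\<bar> * of_bool (\<forall>v\<in>W. X v))
         \<le> 2 ^ length ss * q ^ card (W \<union> (\<Union>s\<in>set ss. set s))"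
  using assms(4,5)
proof (induction ss arbitrary: W)
  case Nil
  then show ?case
    using assms(1-3) by (simp add: expectation_bern_field_all_occupied)
next
  case (Cons s ss)
  let ?E = "measure_pmf.expectation (bern_field Vn q)"
  let ?P = "\<lambda>X. \<bar>\<Prod>s\<leftarrow>ss. Ztup q X s\<bar>"
  let ?U = "\<Union>s\<in>set ss. set s"
  have "?E (\<lambda>X. \<bar>\<Prod>s\<leftarrow>s # ss. Ztup q X s\<bar> * of_bool (\<forall>v\<in>W. X v))
      \<le> ?E (\<lambda>X. ?P X * of_bool (\<forall>v\<in>W \<union> set s. X v) + q ^ length s * (?P X * of_bool (\<forall>v\<in>W. X v)))"
  proof (intro integral_mono integrable_bern_field assms(1))
    fix X
    have occ: "of_bool (\<forall>v\<in>W \<union> set s. X v) = Xtup X s * of_bool (\<forall>v\<in>W. X v)"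
      by (auto simp: Xtup_eq_of_bool)
    have "\<bar>Ztup q X s\<bar> * (?P X * of_bool (\<forall>v\<in>W. X v))
        \<le> (Xtup X s + q ^ length s) * (?P X * of_bool (\<forall>v\<in>W. X v))"
      using abs_Ztup_le[OF assms(2,3)] by (intro mult_right_mono) auto
    then show "\<bar>\<Prod>s\<leftarrow>s # ss. Ztup q X s\<bar> * of_bool (\<forall>v\<in>W. X v)
        \<le> ?P X * of_bool (\<forall>v\<in>W \<union> set s. X v) + q ^ length s * (?P X * of_bool (\<forall>v\<in>W. X v))"
      unfolding occ by (simp add: abs_mult algebra_simps)
  qed
  also have "\<dots> = ?E (\<lambda>X. ?P X * of_bool (\<forall>v\<in>W \<union> set s. X v))
      + q ^ length s * ?E (\<lambda>X. ?P X * of_bool (\<forall>v\<in>W. X v))"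
    by (simp add: integrable_bern_field assms(1))
  also have "\<dots> \<le> 2 ^ length ss * q ^ card (W \<union> set s \<union> ?U)
      + q ^ length s * (2 ^ length ss * q ^ card (W \<union> ?U))"
    using Cons assms(2) by (intro add_mono mult_left_mono) auto
  also have "\<dots> \<le> 2 ^ length (s # ss) * q ^ card (W \<union> (\<Union>s\<in>set (s # ss). set s))"
  proof -
    have "card (W \<union> set s \<union> ?U) \<le> length s + card (W \<union> ?U)"
      using card_Un_le[of "set s" "W \<union> ?U"] card_length[of s] by (simp add: Un_ac)
    then have "q ^ length s * q ^ card (W \<union> ?U) \<le> q ^ card (W \<union> set s \<union> ?U)"
      using assms(2,3) by (simp add: power_add[symmetric] power_decreasing)
    then show ?thesis
      using assms(2) by (simp add: Un_ac algebra_simps)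
  qed
  finally show ?case .
qed

lemma absZmoment_upper_bound:
  assumes "finite Vn" "0 \<le> q" "q \<le> 1" "\<forall>s\<in>set ss. set s \<subseteq> Vn"
  shows "absZmoment Vn q ss \<le> 2 ^ length ss * q ^ card (\<Union>s\<in>set ss. set s)"
  using expectation_abs_prod_Ztup_occupied_le[OF assms(1-3) empty_subsetI assms(4)]
  by (simp add: absZmoment_def)

lemma two_power_le_fact: "(2::real) ^ n \<le> fact (n + 2)"
proof (induction n)
  case (Suc n)
  have "(2::real) ^ Suc n = 2 * 2 ^ n" by simp
  also have "\<dots> \<le> real (Suc n + 2) * fact (n + 2)"
    using Suc by (intro mult_mono) auto
  also have "\<dots> = fact (Suc n + 2)" by (simp add: fact_Suc)
  finally show ?case .
qed auto

lemma uniform_bound_if_limsup_less: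
  fixes p :: "nat \<Rightarrow> real"
  assumes "\<forall>n. p n < b" "limsup (\<lambda>n. ereal (p n)) < ereal b"
  shows "\<exists>c<b. \<forall>n. p n \<le> c"
proof -
  obtain d where d: "limsup (\<lambda>n. ereal (p n)) < ereal d" "d < b"
    using ereal_dense2[OF assms(2)] by auto
  obtain N where N: "\<And>n. n \<ge> N \<Longrightarrow> p n < d"
    using Limsup_lessD[OF d(1)] by (auto simp: eventually_sequentially)
  define c where "c = Max (insert d (p ` {..<N}))"
  have "c \<in> insert d (p ` {..<N})"
    unfolding c_def by (intro Max_in) auto
  then have "c < b"
    using d(2) assms(1) by auto
  moreover have "p n \<le> c" for n
  proof -
    have "p n \<le> d \<or> p n \<in> p ` {..<N}"
      using N[of n] by (cases "n < N") auto
    then show ?thesis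
      unfolding c_def by (meson Max_ge finite_imageI finite_insert finite_lessThan insertCI order_trans)
  qed
  ultimately show ?thesis by blast
qed

theorem lemma4p2:
  fixes V :: "nat \<Rightarrow> 'v set" and p :: "nat \<Rightarrow> real" and r L :: nat
  assumes "r \<ge> 1" and "L \<ge> 1"
    and "\<forall>n. finite (V n)"
    and "\<forall>n. 0 < p n \<and> p n < 1"
    and "limsup (\<lambda>n. ereal (p n)) < 1"
  shows "\<exists>C>0. \<forall>n ss. length ss = L \<and>
           (\<forall>s\<in>set ss. length s = r \<and> distinct s \<and> set s \<subseteq> V n) \<longrightarrow>
           C * p n ^ card (\<Union>s\<in>set ss. set s) \<le> absZmoment (V n) (p n) ss \<and>
           absZmoment (V n) (p n) ss \<le> fact (L + 2) * p n ^ card (\<Union>s\<in>set ss. set s)"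
proof -
  obtain c where c: "c < 1" "\<And>n. p n \<le> c"
    using uniform_bound_if_limsup_less[of p 1] assms(4,5) by (auto simp: one_ereal_def)
  show ?thesis
  proof (intro exI[of _ "(1 - c) ^ L"] conjI allI impI)
    show "0 < (1 - c) ^ L"
      using c(1) by simp
  next
    fix n and ss :: "'v list list"
    assume ss: "length ss = L \<and> (\<forall>s\<in>set ss. length s = r \<and> distinct s \<and> set s \<subseteq> V n)"
    let ?a = "card (\<Union>s\<in>set ss. set s)"
    have p: "0 \<le> p n" "p n \<le> 1"
      using assms(4) less_imp_le by blast+
    have "(1 - c) ^ L * p n ^ ?a \<le> (1 - p n) ^ L * p n ^ ?a"
      using c p by (intro mult_right_mono power_mono) auto
    also have "\<dots> \<le> absZmoment (V n) (p n) ss"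
      using absZmoment_lower_bound[of "V n" "p n" ss] ss assms(1,3) p by fastforce
    finally show "(1 - c) ^ L * p n ^ ?a \<le> absZmoment (V n) (p n) ss" .
    have "absZmoment (V n) (p n) ss \<le> 2 ^ L * p n ^ ?a"
      using absZmoment_upper_bound[of "V n" "p n" ss] ss assms(3) p by auto
    also have "\<dots> \<le> fact (L + 2) * p n ^ ?a"
      using p two_power_le_fact by (intro mult_right_mono) auto
    finally show "absZmoment (V n) (p n) ss \<le> fact (L + 2) * p n ^ ?a" .
  qed
qed

end
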